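(* Let $C$ be an $E$-linear code of length $2n$. Then (1) $C^{\perp_{S_L}}=\kappa (C_{Res})^{\perp_S}\oplus \zeta (C_{Res})^{\perp_S}$; (2) $C^{\perp_{S_R}}=\kappa (C_{Tor})^{\perp_S}\oplus \zeta \mathbb{F}_2^{2n}$; (3) $C^{\perp_S}=\kappa (C_{Tor})^{\perp_S}\oplus \zeta (C_{Res})^{\perp_S}$.
   Context: $E=\langle \kappa,\tau \mid 2\kappa=2\tau=0,\ \kappa^2=\kappa,\ \tau^2=\tau,\ \kappa\tau=\kappa,\ \tau\kappa=\tau\rangle$ is the non-unital ring $\{0,\kappa,\tau,\zeta\}$, $\zeta=\kappa+\tau$, with $e\kappa=e\tau=e$, $e\zeta=0$ for all $e\in E$. Every $e\in E$ is uniquely $u\kappa+v\zeta$ ($u,v\in\mathbb{F}_2$); $\pi(u\kappa+v\zeta)=u$, componentwise. For $v\in\mathbb{F}_2^m$ and $e\in E$, $ev=(ev_1,\dots,ev_m)$ with $0\cdot e=0$, $1\cdot e=e$; for binary codes $A,B$, $\kappa A\oplus\zeta B=\{\kappa a+\zeta b: a\in A,b\in B\}$. An $E$-linear code of length $2n$ is a left $E$-submodule $C\subseteq E^{2n}$; $C_{Res}=\pi(C)$, $C_{Tor}=\{v\in\mathbb{F}_2^{2n}:\zeta v\in C\}$. Symplectic inner product (over $E$ or $\mathbb{F}_2$): $\langle (u|v),(u'|v')\rangle_s=\sum_i u_iv'_i+\sum_i v_iu'_i$. For binary $B$, $B^{\perp_S}=\{z\in\mathbb{F}_2^{2n}:\langle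 z,w\rangle_s=0\ \forall w\in B\}$. For $E$-linear $C$: $C^{\perp_{S_L}}=\{z\in E^{2n}:\langle z,w\rangle_s=0\ \forall w\in C\}$, $C^{\perp_{S_R}}=\{z\in E^{2n}:\langle w,z\rangle_s=0\ \forall w\in C\}$, $C^{\perp_S}=C^{\perp_{S_L}}\cap C^{\perp_{S_R}}$. *)

theory Defs
  imports Main "HOL-Library.Z2"
begin

datatype E = E0 | Kappa | Tau | Zeta

fun addE :: "E \<Rightarrow> E \<Rightarrow> E" where
  "addE E0 y = y"
| "addE Kappa E0 = Kappa" | "addE Kappa Kappa = E0" | "addE Kappa Tau = Zeta" | "addE Kappa Zeta = Tau"
| "addE Tau E0 = Tau" | "addE Tau Kappa = Zeta" | "addE Tau Tau = E0" | "addE Tau Zeta = Kappa"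
| "addE Zeta E0 = Zeta" | "addE Zeta Kappa = Tau" | "addE Zeta Tau = Kappa" | "addE Zeta Zeta = E0"

fun mulE :: "E \<Rightarrow> E \<Rightarrow> E" where
  "mulE x Kappa = x"
| "mulE x Tau = x"
| "mulE x Zeta = E0"
| "mulE x E0 = E0"

instantiation E :: "{ab_group_add, times}"
begin
definition "0 = E0"
definition "x + y = addE x y"
definition "x - y = addE x y"
definition "- x = (x::E)"
definition "x * y = mulE x y"
instance
proof
  fix a b c :: E
  show "a + b + c = a + (b + c)" unfolding plus_E_def by (cases a; cases b; cases c) simp_all
  show "a + b = b + a" unfolding plus_E_def by (cases a; cases b) simp_all
  show "0 + a = a" unfolding plus_E_def zero_E_def by simp
  show "- a + a = 0" unfolding plus_E_def zero_E_def uminus_E_def by (cases a) simp_all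
  show "a - b = a + - b" unfolding plus_E_def minus_E_def uminus_E_def by simp
qed
end

definition bsmul :: "bit \<Rightarrow> E \<Rightarrow> E" where
  "bsmul u e = (if u = 0 then 0 else e)"

definition evec :: "E \<Rightarrow> (nat \<Rightarrow> bit) \<Rightarrow> (nat \<Rightarrow> E)" where
  "evec e v = (\<lambda>i. bsmul (v i) e)"

text \<open>Reduction map pi(u kappa + v zeta) = u.\<close>
fun piE :: "E \<Rightarrow> bit" where
  "piE E0 = 0" | "piE Kappa = 1" | "piE Tau = 1" | "piE Zeta = 0"

text \<open>Vectors of length m: functions on nat vanishing at indices \<ge> m (coordinates 0..m-1).\<close>
definition vecs :: "nat \<Rightarrow> (nat \<Rightarrow> 'a::zero) set" where
  "vecs m = {x. \<forall>i\<ge>m. x i = 0}"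

text \<open>Symplectic form on length-2n vectors: coordinates 0..n-1 are u, n..2n-1 are v.\<close>
definition sympl :: "nat \<Rightarrow> (nat \<Rightarrow> 'a::{comm_monoid_add,times}) \<Rightarrow> (nat \<Rightarrow> 'a) \<Rightarrow> 'a" where
  "sympl n x y = (\<Sum>i<n. x i * y (n + i)) + (\<Sum>i<n. x (n + i) * y i)"

definition E_linear :: "nat \<Rightarrow> (nat \<Rightarrow> E) set \<Rightarrow> bool" where
  "E_linear n C \<longleftrightarrow> C \<subseteq> vecs (2*n) \<and> (\<lambda>i. 0) \<in> C
     \<and> (\<forall>x\<in>C. \<forall>y\<in>C. (\<lambda>i. x i + y i) \<in> C)
     \<and> (\<forall>e::E. \<forall>x\<in>C. (\<lambda>i. e * x i) \<in> C)"

definition C_Res :: "(nat \<Rightarrow> E) set \<Rightarrow> (nat \<Rightarrow> bit) set" where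
  "C_Res C = (\<lambda>x. \<lambda>i. piE (x i)) ` C"

definition C_Tor :: "nat \<Rightarrow> (nat \<Rightarrow> E) set \<Rightarrow> (nat \<Rightarrow> bit) set" where
  "C_Tor n C = {v \<in> vecs (2*n). evec Zeta v \<in> C}"

definition bin_perpS :: "nat \<Rightarrow> (nat \<Rightarrow> bit) set \<Rightarrow> (nat \<Rightarrow> bit) set" where
  "bin_perpS n B = {z \<in> vecs (2*n). \<forall>w\<in>B. sympl n z w = 0}"

definition perpSL :: "nat \<Rightarrow> (nat \<Rightarrow> E) set \<Rightarrow> (nat \<Rightarrow> E) set" where
  "perpSL n C = {z \<in> vecs (2*n). \<forall>w\<in>C. sympl n z w = 0}"

definition perpSR :: "nat \<Rightarrow> (nat \<Rightarrow> E) set \<Rightarrow> (nat \<Rightarrow> E) set" where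
  "perpSR n C = {z \<in> vecs (2*n). \<forall>w\<in>C. sympl n w z = 0}"

definition perpS :: "nat \<Rightarrow> (nat \<Rightarrow> E) set \<Rightarrow> (nat \<Rightarrow> E) set" where
  "perpS n C = perpSL n C \<inter> perpSR n C"

definition kz_sum :: "(nat \<Rightarrow> bit) set \<Rightarrow> (nat \<Rightarrow> bit) set \<Rightarrow> (nat \<Rightarrow> E) set" where
  "kz_sum A B = {(\<lambda>i. evec Kappa a i + evec Zeta b i) | a b. a \<in> A \<and> b \<in> B}"

end

theory Submission
  imports Defs
begin

text \<open>Every \<open>e \<in> E\<close> is uniquely \<open>\<kappa> \<pi>(e) + \<zeta> q(e)\<close> with \<open>q = zetaE\<close>. The coordinate \<open>\<pi>\<close> is multiplicative
  and \<open>q(x y) = q(x) \<pi>(y)\<close>, so the symplectic form splits as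
  \<open>\<langle>z, w\<rangle> = \<kappa> \<langle>\<pi> z, \<pi> w\<rangle> + \<zeta> \<langle>q z, \<pi> w\<rangle>\<close>. Hence \<open>z \<perp> C\<close> on the left iff \<open>\<pi> z\<close> and
  \<open>q z\<close> are orthogonal to \<open>C_Res = \<pi>(C)\<close>, while \<open>C \<perp> z\<close> on the right constrains only \<open>\<pi> z\<close>,
  which must be orthogonal to \<open>\<pi>(C) \<union> q(C)\<close>. For a submodule, \<open>\<zeta> w = \<zeta> \<pi>(w)\<close> and
  \<open>w + \<kappa> w = \<zeta> q(w)\<close> give \<open>C_Tor = q(C) \<supseteq> \<pi>(C)\<close>, and all three formulas follow.\<close>

fun zetaE :: "E \<Rightarrow> bit" where
  "zetaE E0 = 0" | "zetaE Kappa = 0" | "zetaE Tau = 1" | "zetaE Zeta = 1"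

abbreviation pi_vec :: "(nat \<Rightarrow> E) \<Rightarrow> (nat \<Rightarrow> bit)" where
  "pi_vec z \<equiv> \<lambda>i. piE (z i)"

abbreviation zeta_vec :: "(nat \<Rightarrow> E) \<Rightarrow> (nat \<Rightarrow> bit)" where
  "zeta_vec z \<equiv> \<lambda>i. zetaE (z i)"

lemma piE_zero [simp]: "piE 0 = 0"
  by (simp add: zero_E_def)

lemma zetaE_zero [simp]: "zetaE 0 = 0"
  by (simp add: zero_E_def)

lemma piE_add: "piE (x + y) = piE x + piE y"
  unfolding plus_E_def by (cases x; cases y) simp_all

lemma zetaE_add: "zetaE (x + y) = zetaE x + zetaE y"
  unfolding plus_E_def by (cases x; cases y) simp_all

lemma piE_mult: "piE (x * y) = piE x * piE y"
  unfolding times_E_def by (cases x; cases y) simp_all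

lemma zetaE_mult: "zetaE (x * y) = zetaE x * piE y"
  unfolding times_E_def by (cases x; cases y) simp_all

lemma E_eq_0_iff: "x = 0 \<longleftrightarrow> piE x = 0 \<and> zetaE x = 0"
  unfolding zero_E_def by (cases x) simp_all

lemma E_decompose: "x = bsmul (piE x) Kappa + bsmul (zetaE x) Zeta"
  unfolding bsmul_def plus_E_def zero_E_def by (cases x) simp_all

lemma piE_bsmul_decompose [simp]: "piE (bsmul u Kappa + bsmul v Zeta) = u"
  unfolding bsmul_def by (cases u; cases v) (simp_all add: piE_add)

lemma zetaE_bsmul_decompose [simp]: "zetaE (bsmul u Kappa + bsmul v Zeta) = v"
  unfolding bsmul_def by (cases u; cases v) (simp_all add: zetaE_add)

lemma zetaE_bsmul_Zeta [simp]: "zetaE (bsmul u Zeta) = u"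
  unfolding bsmul_def by (cases u) simp_all

lemma Zeta_mult: "Zeta * x = bsmul (piE x) Zeta"
  unfolding bsmul_def times_E_def zero_E_def by (cases x) simp_all

lemma add_Kappa_mult: "x + Kappa * x = bsmul (zetaE x) Zeta"
  unfolding bsmul_def times_E_def plus_E_def zero_E_def by (cases x) simp_all

lemma piE_sum: "piE (sum f A) = (\<Sum>a\<in>A. piE (f a))"
  using sum_comp_morphism[of piE f A] by (simp add: piE_add comp_def)

lemma zetaE_sum: "zetaE (sum f A) = (\<Sum>a\<in>A. zetaE (f a))"
  using sum_comp_morphism[of zetaE f A] by (simp add: zetaE_add comp_def)

lemma piE_sympl: "piE (sympl n z w) = sympl n (pi_vec z) (pi_vec w)"
  unfolding sympl_def by (simp add: piE_add piE_sum piE_mult)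

lemma zetaE_sympl: "zetaE (sympl n z w) = sympl n (zeta_vec z) (pi_vec w)"
  unfolding sympl_def by (simp add: zetaE_add zetaE_sum zetaE_mult)

lemma sympl_eq_0_iff:
  "sympl n z w = 0 \<longleftrightarrow> sympl n (pi_vec z) (pi_vec w) = 0 \<and> sympl n (zeta_vec z) (pi_vec w) = 0"
  by (metis E_eq_0_iff piE_sympl zetaE_sympl)

lemma sympl_commute:
  fixes x y :: "nat \<Rightarrow> 'a::{comm_monoid_add, ab_semigroup_mult}"
  shows "sympl n x y = sympl n y x"
  unfolding sympl_def by (simp add: add.commute mult.commute)

lemma sympl_eq_0_iff_right:
  "sympl n w z = 0 \<longleftrightarrow> sympl n (pi_vec z) (pi_vec w) = 0 \<and> sympl n (pi_vec z) (zeta_vec w) = 0"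
  using sympl_eq_0_iff sympl_commute by metis

lemma vecs_E_iff: "z \<in> vecs m \<longleftrightarrow> pi_vec z \<in> vecs m \<and> zeta_vec z \<in> vecs m"
  unfolding vecs_def using E_eq_0_iff by auto

lemma kz_sum_eq: "kz_sum A B = {z. pi_vec z \<in> A \<and> zeta_vec z \<in> B}"
proof (intro set_eqI iffI)
  fix z assume "z \<in> kz_sum A B"
  then show "z \<in> {z. pi_vec z \<in> A \<and> zeta_vec z \<in> B}"
    unfolding kz_sum_def evec_def by auto
next
  fix z assume "z \<in> {z. pi_vec z \<in> A \<and> zeta_vec z \<in> B}"
  moreover have "z = (\<lambda>i. evec Kappa (pi_vec z) i + evec Zeta (zeta_vec z) i)"
    unfolding evec_def using E_decompose by blast
  ultimately show "z \<in> kz_sum A B"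
    unfolding kz_sum_def by blast
qed

lemma bin_perpS_antimono: "A \<subseteq> B \<Longrightarrow> bin_perpS n B \<subseteq> bin_perpS n A"
  unfolding bin_perpS_def by auto

lemma bin_perpS_subset_vecs: "bin_perpS n B \<subseteq> vecs (2*n)"
  unfolding bin_perpS_def by blast

lemma C_Tor_eq_zeta_image:
  assumes "E_linear n C"
  shows "C_Tor n C = zeta_vec ` C"
proof (intro antisym subsetI)
  fix v assume "v \<in> C_Tor n C"
  then have "evec Zeta v \<in> C"
    unfolding C_Tor_def by simp
  moreover have "v = zeta_vec (evec Zeta v)"
    unfolding evec_def by simp
  ultimately show "v \<in> zeta_vec ` C" by blast
next
  fix v assume "v \<in> zeta_vec ` C"
  then obtain w where "w \<in> C" and v: "v = zeta_vec w" by blast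
  then have "(\<lambda>i. w i + Kappa * w i) \<in> C" and "w \<in> vecs (2*n)"
    using assms unfolding E_linear_def by auto
  then show "v \<in> C_Tor n C"
    unfolding C_Tor_def evec_def v add_Kappa_mult using vecs_E_iff by auto
qed

lemma C_Res_subset_C_Tor:
  assumes "E_linear n C"
  shows "C_Res C \<subseteq> C_Tor n C"
proof
  fix v assume "v \<in> C_Res C"
  then obtain w where "w \<in> C" and v: "v = pi_vec w"
    unfolding C_Res_def by blast
  then have "(\<lambda>i. Zeta * w i) \<in> C" and "w \<in> vecs (2*n)"
    using assms unfolding E_linear_def by auto
  then show "v \<in> C_Tor n C"
    unfolding C_Tor_def evec_def v Zeta_mult using vecs_E_iff by auto
qed

lemma perpSL_eq: "perpSL n C = kz_sum (bin_perpS n (C_Res C)) (bin_perpS n (C_Res C))"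
  unfolding perpSL_def kz_sum_eq bin_perpS_def C_Res_def
  by (auto simp: vecs_E_iff sympl_eq_0_iff)

lemma perpSR_eq:
  assumes "E_linear n C"
  shows "perpSR n C = kz_sum (bin_perpS n (C_Tor n C)) (vecs (2*n))"
proof -
  have "C_Tor n C = C_Res C \<union> zeta_vec ` C"
    using C_Res_subset_C_Tor[OF assms] C_Tor_eq_zeta_image[OF assms] by auto
  then have "bin_perpS n (C_Tor n C)
      = {a \<in> vecs (2*n). \<forall>w\<in>C. sympl n a (pi_vec w) = 0 \<and> sympl n a (zeta_vec w) = 0}"
    unfolding C_Res_def bin_perpS_def by auto
  then show ?thesis
    unfolding perpSR_def kz_sum_eq by (auto simp: vecs_E_iff sympl_eq_0_iff_right)
qed

lemma perpS_eq:
  assumes "E_linear n C"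
  shows "perpS n C = kz_sum (bin_perpS n (C_Tor n C)) (bin_perpS n (C_Res C))"
  using bin_perpS_antimono[OF C_Res_subset_C_Tor[OF assms], of n] bin_perpS_subset_vecs[of n]
  unfolding perpS_def perpSL_eq perpSR_eq[OF assms] kz_sum_eq by auto

theorem mainTheorem6:
  fixes n :: nat and C :: "(nat \<Rightarrow> E) set"
  assumes "E_linear n C"
  shows "perpSL n C = kz_sum (bin_perpS n (C_Res C)) (bin_perpS n (C_Res C))
    \<and> perpSR n C = kz_sum (bin_perpS n (C_Tor n C)) (vecs (2*n))
    \<and> perpS n C = kz_sum (bin_perpS n (C_Tor n C)) (bin_perpS n (C_Res C))"
  using perpSL_eq perpSR_eq[OF assms] perpS_eq[OF assms] by blast

end
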